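(* Let $n\ge3$ and $L\cong\mathbf{2}^n$ be a Boolean lattice. Then the strong metric dimension of its zero-divisor graph is $\mathrm{sdim}_M(G(L))=2^n-2n$.
   Context: The zero-divisor graph $G(L)$ of a lattice $L$ with $0$ has as vertices the nonzero $a\in L$ such that $a\wedge b=0$ for some nonzero $b$, with distinct vertices adjacent iff their meet is $0$. In a connected graph $G$, $w$ strongly resolves $u,v$ if some shortest $u$–$w$ path contains $v$ or some shortest $v$–$w$ path contains $u$; $\mathrm{sdim}_M(G)$ is the minimum size of a set $W$ of vertices such that every pair of vertices is strongly resolved by some vertex of $W$. *)

theory Defs
  imports Main
begin

definition walk :: "'a set \<Rightarrow> ('a \<Rightarrow> 'a \<Rightarrow> bool) \<Rightarrow> 'a list \<Rightarrow> bool" where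
  "walk V E xs \<longleftrightarrow> xs \<noteq> [] \<and> set xs \<subseteq> V \<and>
     (\<forall>i. Suc i < length xs \<longrightarrow> E (xs ! i) (xs ! Suc i))"

text \<open>A shortest u-w path: a u-w walk of minimum number of vertices
  (a shortest walk is automatically a path).\<close>
definition geodesic :: "'a set \<Rightarrow> ('a \<Rightarrow> 'a \<Rightarrow> bool) \<Rightarrow> 'a \<Rightarrow> 'a \<Rightarrow> 'a list \<Rightarrow> bool" where
  "geodesic V E u w xs \<longleftrightarrow> walk V E xs \<and> hd xs = u \<and> last xs = w \<and>
     (\<forall>ys. walk V E ys \<and> hd ys = u \<and> last ys = w \<longrightarrow> length xs \<le> length ys)"

definition strongly_resolves :: "'a set \<Rightarrow> ('a \<Rightarrow> 'a \<Rightarrow> bool) \<Rightarrow> 'a \<Rightarrow> 'a \<Rightarrow> 'a \<Rightarrow> bool" where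
  "strongly_resolves V E w u v \<longleftrightarrow>
     (\<exists>p. geodesic V E u w p \<and> v \<in> set p) \<or> (\<exists>p. geodesic V E v w p \<and> u \<in> set p)"

definition strong_resolving_set :: "'a set \<Rightarrow> ('a \<Rightarrow> 'a \<Rightarrow> bool) \<Rightarrow> 'a set \<Rightarrow> bool" where
  "strong_resolving_set V E W \<longleftrightarrow> W \<subseteq> V \<and> finite W \<and>
     (\<forall>u\<in>V. \<forall>v\<in>V. u \<noteq> v \<longrightarrow> (\<exists>w\<in>W. strongly_resolves V E w u v))"

definition sdim :: "'a set \<Rightarrow> ('a \<Rightarrow> 'a \<Rightarrow> bool) \<Rightarrow> nat" where
  "sdim V E = (LEAST k. \<exists>W. strong_resolving_set V E W \<and> card W = k)"

definition zd_vertices :: "'a::{lattice,order_bot} set" where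
  "zd_vertices = {a. a \<noteq> bot \<and> (\<exists>b. b \<noteq> bot \<and> inf a b = bot)}"

definition zd_adj :: "'a::{lattice,order_bot} \<Rightarrow> 'a \<Rightarrow> bool" where
  "zd_adj a b \<longleftrightarrow> a \<in> zd_vertices \<and> b \<in> zd_vertices \<and> a \<noteq> b \<and> inf a b = bot"

end

theory Submission
  imports Defs
begin

text \<open>Identify \<open>L\<close> with the subsets of \<open>{..<n}\<close>. Then \<open>G(L)\<close> is the graph on the nonempty
  proper subsets in which disjoint sets are adjacent, and the distance of \<open>A \<noteq> B\<close> is 1 if they are
  disjoint, 3 if they overlap and cover everything, and 2 otherwise. Two overlapping incomparable
  sets are mutually maximally distant, so every strong resolving set contains one of them: the
  vertices it misses form a laminar family of nonempty proper subsets, which has at most \<open>2n - 2\<close>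
  members. Conversely, missing exactly the \<open>n\<close> singletons and the \<open>n - 2\<close> initial segments
  \<open>{..<k}\<close>, \<open>2 \<le> k < n\<close>, still leaves a strong resolving set, of size \<open>2^n - 2n\<close>.\<close>

section \<open>Graph distance\<close>

lemma walk_singleton [simp]: "walk V E [x] \<longleftrightarrow> x \<in> V"
  by (simp add: walk_def)

lemma walk_Cons_Cons [simp]:
  "walk V E (x # y # xs) \<longleftrightarrow> x \<in> V \<and> E x y \<and> walk V E (y # xs)"
  unfolding walk_def by (auto simp: All_less_Suc2)

lemma walk_ConsD: "walk V E (x # xs) \<Longrightarrow> x \<in> V"
  by (simp add: walk_def)

lemma walk_append_Cons:
  "walk V E (xs @ v # ys) \<longleftrightarrow> walk V E (xs @ [v]) \<and> walk V E (v # ys)"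
proof (induction xs)
  case Nil
  then show ?case using walk_ConsD[of V E v ys] by auto
next
  case (Cons a xs)
  then show ?case using walk_ConsD[of V E v ys] by (cases xs) auto
qed

text \<open>These axioms force \<open>d\<close> to be the path distance of \<open>(V, E)\<close> (\<open>walk_of_dist\<close>,
  \<open>dist_le_length_walk\<close>), so a closed formula for a distance can be checked one edge at a time.\<close>
locale graph_distance =
  fixes V :: "'a set" and E :: "'a \<Rightarrow> 'a \<Rightarrow> bool" and d :: "'a \<Rightarrow> 'a \<Rightarrow> nat"
  assumes dist_self: "d u u = 0"
    and dist_eq_0D: "u \<in> V \<Longrightarrow> v \<in> V \<Longrightarrow> d u v = 0 \<Longrightarrow> u = v"
    and dist_edge_le: "E x z \<Longrightarrow> y \<in> V \<Longrightarrow> d x y \<le> d z y + 1"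
    and dist_descent: "u \<in> V \<Longrightarrow> w \<in> V \<Longrightarrow> 0 < d u w \<Longrightarrow> \<exists>x\<in>V. E u x \<and> d x w + 1 = d u w"
begin

lemma dist_le_length_walk:
  "walk V E xs \<Longrightarrow> last xs \<in> V \<Longrightarrow> d (hd xs) (last xs) + 1 \<le> length xs"
proof (induction xs rule: induct_list012)
  case (3 x y zs)
  then have "d y (last (y # zs)) + 1 \<le> length (y # zs)" by simp
  moreover have "d x (last (y # zs)) \<le> d y (last (y # zs)) + 1"
    using 3 dist_edge_le by simp
  ultimately show ?case by simp
qed (auto simp: walk_def dist_self)

lemma walk_of_dist:
  assumes "u \<in> V" "w \<in> V"
  obtains xs where "walk V E xs" "hd xs = u" "last xs = w" "length xs = d u w + 1"
  using assms
proof (induction "d u w" arbitrary: u thesis)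
  case 0
  then have "u = w" using dist_eq_0D by auto
  then show ?case using 0 by (intro "0.prems"(1)[of "[u]"]) auto
next
  case (Suc k)
  then obtain x where x: "x \<in> V" "E u x" "d x w + 1 = d u w"
    using dist_descent[of u w] by auto
  with Suc obtain xs where xs: "walk V E xs" "hd xs = x" "last xs = w" "length xs = d x w + 1"
    by (metis add_right_cancel Suc_eq_plus1)
  then obtain ys where "xs = x # ys" by (cases xs) auto
  then show ?case using xs x Suc.prems by (intro Suc.prems(1)[of "u # xs"]) auto
qed

lemma walk_through:
  assumes "u \<in> V" "v \<in> V" "w \<in> V"
  obtains q where "walk V E q" "hd q = u" "last q = w" "length q = d u v + d v w + 1" "v \<in> set q"
proof -
  obtain p where p: "walk V E p" "hd p = u" "last p = v" "length p = d u v + 1"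
    using walk_of_dist[OF assms(1,2)] .
  obtain p' where p': "walk V E p'" "hd p' = v" "last p' = w" "length p' = d v w + 1"
    using walk_of_dist[OF assms(2,3)] .
  obtain ys where ys: "p = ys @ [v]" using p(3,4) by (cases p rule: rev_exhaust) auto
  obtain zs where zs: "p' = v # zs" using p'(2,4) by (cases p') auto
  show ?thesis
  proof (rule that[of "ys @ v # zs"])
    show "walk V E (ys @ v # zs)"
      using p(1) p'(1) walk_append_Cons[of V E ys v zs] unfolding ys zs by simp
    show "hd (ys @ v # zs) = u" using p(2) unfolding ys by (simp add: hd_append split: if_splits)
    show "last (ys @ v # zs) = w" using p'(3) unfolding zs by simp
    show "length (ys @ v # zs) = d u v + d v w + 1" using p(4) p'(4) unfolding ys zs by simp
  qed simp
qed

lemma dist_triangle: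
  assumes "u \<in> V" "v \<in> V" "w \<in> V"
  shows "d u w \<le> d u v + d v w"
proof -
  obtain q where q: "walk V E q" "hd q = u" "last q = w" "length q = d u v + d v w + 1"
    using walk_through[OF assms] .
  then have "d (hd q) (last q) + 1 \<le> length q" using assms(3) by (intro dist_le_length_walk) simp_all
  then show ?thesis using q by simp
qed

lemma geodesic_iff:
  assumes "u \<in> V" "w \<in> V"
  shows "geodesic V E u w p \<longleftrightarrow> walk V E p \<and> hd p = u \<and> last p = w \<and> length p = d u w + 1"
proof -
  obtain q where "walk V E q" "hd q = u" "last q = w" "length q = d u w + 1"
    using walk_of_dist[OF assms] .
  then show ?thesis
    unfolding geodesic_def using dist_le_length_walk assms by (metis le_antisym)
qed

lemma on_geodesic_iff:
  assumes "u \<in> V" "v \<in> V" "w \<in> V"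
  shows "(\<exists>p. geodesic V E u w p \<and> v \<in> set p) \<longleftrightarrow> d u v + d v w = d u w"
proof
  assume "\<exists>p. geodesic V E u w p \<and> v \<in> set p"
  then obtain p where p: "walk V E p" "hd p = u" "last p = w" "length p = d u w + 1" "v \<in> set p"
    using geodesic_iff assms by blast
  then obtain ys zs where p_eq: "p = ys @ v # zs" by (meson split_list)
  have "walk V E (ys @ [v])" "walk V E (v # zs)"
    using p(1) walk_append_Cons[of V E ys v zs] unfolding p_eq by auto
  moreover have "hd (ys @ [v]) = u" using p(2) p_eq by (simp add: hd_append split: if_splits)
  moreover have "last (v # zs) = w" using p(3) p_eq by simp
  ultimately have "d u v + 1 \<le> length (ys @ [v])" "d v w + 1 \<le> length (v # zs)"
    using dist_le_length_walk assms by fastforce+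
  then have "d u v + d v w \<le> d u w" using p(4) p_eq by simp
  then show "d u v + d v w = d u w" using dist_triangle[OF assms] by linarith
next
  assume "d u v + d v w = d u w"
  then show "\<exists>p. geodesic V E u w p \<and> v \<in> set p"
    using walk_through[OF assms] geodesic_iff assms by metis
qed

lemma strongly_resolves_iff:
  assumes "u \<in> V" "v \<in> V" "w \<in> V"
  shows "strongly_resolves V E w u v \<longleftrightarrow> d u v + d v w = d u w \<or> d v u + d u w = d v w"
  unfolding strongly_resolves_def on_geodesic_iff[OF assms] on_geodesic_iff[OF assms(2,1,3)] ..

lemma strongly_resolves_endpoint:
  assumes "u \<in> V" "v \<in> V"
  shows "strongly_resolves V E u u v" "strongly_resolves V E v u v"
  using strongly_resolves_iff[OF assms assms(1)] strongly_resolves_iff[OF assms assms(2)]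
  by (simp_all add: dist_self)

end

section \<open>Laminar families\<close>

definition laminar :: "'a set set \<Rightarrow> bool" where
  "laminar F \<longleftrightarrow> (\<forall>S\<in>F. \<forall>T\<in>F. S \<inter> T = {} \<or> S \<subseteq> T \<or> T \<subseteq> S)"

lemma laminar_subset: "laminar F \<Longrightarrow> G \<subseteq> F \<Longrightarrow> laminar G"
  unfolding laminar_def by blast

lemma laminar_insert_top: "laminar F \<Longrightarrow> F \<subseteq> Pow X \<Longrightarrow> laminar (insert X F)"
  unfolding laminar_def by blast

lemma laminar_image_Diff_singleton: "laminar F \<Longrightarrow> laminar ((\<lambda>T. T - {y}) ` F)"
  unfolding laminar_def by blast

lemma laminar_minimal_subset:
  assumes "laminar F" "S \<in> F" "T \<in> F" "S \<inter> T \<noteq> {}"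
    and minimal: "\<And>T. T \<in> F \<Longrightarrow> T \<subseteq> S \<Longrightarrow> T = S"
  shows "S \<subseteq> T"
proof -
  have "S \<subseteq> T \<or> T \<subseteq> S" using assms(1-4) unfolding laminar_def by blast
  then show ?thesis using minimal[OF assms(3)] by blast
qed

text \<open>Deleting a point \<open>y\<close> of a minimal member \<open>S\<close> is injective on the other members: a member
  containing \<open>y\<close> contains \<open>S\<close>, hence also a second point \<open>x\<close> of \<open>S\<close>, and then so does its
  partner.\<close>
lemma laminar_inj_on_Diff_singleton:
  assumes lam: "laminar F" and S: "S \<in> F" "x \<in> S" "y \<in> S" "x \<noteq> y"
    and minimal: "\<And>T. T \<in> F \<Longrightarrow> T \<subseteq> S \<Longrightarrow> T = S"
  shows "inj_on (\<lambda>T. T - {y}) (F - {S})"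
proof (rule inj_onI)
  have above: "S \<subseteq> T" if "T \<in> F" "y \<in> T \<or> x \<in> T" for T
    using laminar_minimal_subset[OF lam S(1) that(1) _ minimal] that S by blast
  fix T T' assume "T \<in> F - {S}" "T' \<in> F - {S}" and eq: "T - {y} = T' - {y}"
  then show "T = T'" using above[of T] above[of T'] S by blast
qed

lemma card_laminar_le:
  assumes "finite X" "F \<subseteq> Pow X" "laminar F" "\<forall>T\<in>F. 2 \<le> card T"
  shows "card F \<le> card X - 1"
  using assms
proof (induction "card X" arbitrary: X F rule: less_induct)
  case less
  have fin: "finite F" "\<And>T. T \<in> F \<Longrightarrow> finite T"
    using less.prems(1,2) by (auto intro: finite_subset rev_finite_subset)
  show ?case
  proof (cases "F = {}")
    case False
    obtain S where S: "S \<in> F" and min_card: "\<And>T. T \<in> F \<Longrightarrow> card S \<le> card T"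
      using fin(1) False by (metis arg_min_if_finite(1,2) not_less)
    have minimal: "T = S" if "T \<in> F" "T \<subseteq> S" for T
      using card_subset_eq[OF fin(2)[OF S] that(2)] min_card[OF that(1)]
        card_mono[OF fin(2)[OF S] that(2)] by simp
    obtain x y where xy: "x \<in> S" "y \<in> S" "x \<noteq> y"
      using less.prems(4) S by (metis card_le_Suc_iff numeral_2_eq_2 insertCI)
    define F' where "F' = (\<lambda>T. T - {y}) ` (F - {S})"
    have y: "y \<in> X" using S xy less.prems(2) by blast
    have card_F: "card F = card F' + 1"
      unfolding F'_def
      using card_image[OF laminar_inj_on_Diff_singleton[OF less.prems(3) S xy minimal]]
        card.remove[OF fin(1) S] by simp
    have "F' \<subseteq> Pow (X - {y})" using less.prems(2) unfolding F'_def by auto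
    moreover have "laminar F'" unfolding F'_def
      by (intro laminar_image_Diff_singleton laminar_subset[OF less.prems(3)]) simp
    moreover have "2 \<le> card T'" if "T' \<in> F'" for T'
    proof -
      obtain T where T: "T \<in> F" "T \<noteq> S" "T' = T - {y}" using \<open>T' \<in> F'\<close> unfolding F'_def by auto
      show ?thesis
      proof (cases "y \<in> T")
        case True
        then have "S \<subset> T"
          using laminar_minimal_subset[OF less.prems(3) S T(1) _ minimal] T(2) xy by blast
        then have "card S < card T" using psubset_card_mono[OF fin(2)[OF T(1)]] by simp
        then show ?thesis using less.prems(4) S T(3) True fin(2)[OF T(1)] by fastforce
      next
        case False
        then show ?thesis using T less.prems(4) by auto
      qed
    qed
    ultimately have card_F': "card F' \<le> card (X - {y}) - 1"
      using less.hyps[OF card_Diff1_less[OF less.prems(1) y]] less.prems(1) by blast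
    have "2 \<le> card X"
      using less.prems card_mono S by (meson PowD subsetD le_trans)
    then show ?thesis using card_F card_F' y less.prems(1) by simp
  qed simp
qed

lemma card_laminar_proper_le:
  assumes "finite X" "2 \<le> card X" "F \<subseteq> Pow X - {{}, X}" "laminar F"
  shows "card F \<le> 2 * card X - 2"
proof -
  define Big where "Big = {T \<in> F. 2 \<le> card T}"
  have "F \<subseteq> (\<lambda>x. {x}) ` X \<union> Big"
  proof
    fix T assume T: "T \<in> F"
    then have "finite T" "T \<noteq> {}" "T \<subseteq> X" using assms(1,3) finite_subset by auto
    show "T \<in> (\<lambda>x. {x}) ` X \<union> Big"
    proof (cases "2 \<le> card T")
      case False
      then have "card T = 1" using \<open>finite T\<close> \<open>T \<noteq> {}\<close> card_0_eq[of T] by linarith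
      then obtain x where "T = {x}" by (auto simp: card_1_singleton_iff)
      then show ?thesis using \<open>T \<subseteq> X\<close> by auto
    qed (use T in \<open>auto simp: Big_def\<close>)
  qed
  moreover have "finite Big" using assms(1,3) unfolding Big_def by (auto intro: finite_subset)
  ultimately have "card F \<le> card ((\<lambda>x. {x}) ` X) + card Big"
    using assms(1) by (meson card_Un_le card_mono finite_UnI finite_imageI le_trans)
  moreover have "card ((\<lambda>x. {x}) ` X) \<le> card X" using assms(1) by (rule card_image_le)
  moreover have "card (insert X Big) \<le> card X - 1"
  proof (rule card_laminar_le)
    show "laminar (insert X Big)" using assms(3,4) unfolding Big_def
      by (intro laminar_insert_top laminar_subset[OF assms(4)]) auto
  qed (use assms in \<open>auto simp: Big_def\<close>)
  moreover have "X \<notin> Big" using assms(3) unfolding Big_def by auto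
  ultimately show ?thesis using \<open>finite Big\<close> by simp
qed

section \<open>Distance between subsets\<close>

text \<open>The distance in the zero-divisor graph of the subsets of \<open>X\<close>: overlapping \<open>A\<close>, \<open>B\<close> have the
  common neighbour \<open>X - (A \<union> B)\<close> unless they cover \<open>X\<close>, in which case \<open>A\<close>, \<open>X - A\<close>, \<open>X - B\<close>, \<open>B\<close>
  is a shortest path.\<close>
definition set_dist :: "'a set \<Rightarrow> 'a set \<Rightarrow> 'a set \<Rightarrow> nat" where
  "set_dist X A B = (if A = B then 0 else if A \<inter> B = {} then 1 else if A \<union> B = X then 3 else 2)"

definition set_resolves :: "'a set \<Rightarrow> 'a set \<Rightarrow> 'a set \<Rightarrow> 'a set \<Rightarrow> bool" where
  "set_resolves X C A B \<longleftrightarrow>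
     set_dist X A B + set_dist X B C = set_dist X A C \<or> set_dist X B A + set_dist X A C = set_dist X B C"

lemma set_dist_self [simp]: "set_dist X A A = 0"
  by (simp add: set_dist_def)

lemma set_dist_commute: "set_dist X A B = set_dist X B A"
  unfolding set_dist_def by (auto simp: Int_commute Un_commute)

lemma set_dist_eq_1I: "x \<in> A \<Longrightarrow> A \<inter> B = {} \<Longrightarrow> set_dist X A B = 1"
  unfolding set_dist_def by auto

lemma set_dist_eq_2I:
  "x \<in> A \<Longrightarrow> x \<notin> B \<Longrightarrow> y \<in> A \<Longrightarrow> y \<in> B \<Longrightarrow> z \<in> X \<Longrightarrow> z \<notin> A \<Longrightarrow> z \<notin> B \<Longrightarrow>
    set_dist X A B = 2"
  unfolding set_dist_def by auto

lemma set_dist_eq_3I: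
  "x \<in> A \<Longrightarrow> x \<notin> B \<Longrightarrow> y \<in> A \<Longrightarrow> y \<in> B \<Longrightarrow> A \<union> B = X \<Longrightarrow> set_dist X A B = 3"
  unfolding set_dist_def by auto

lemma set_dist_le_3: "set_dist X A B \<le> 3"
  unfolding set_dist_def by simp

lemma set_dist_neighbour_le:
  assumes "C \<subseteq> X" "C \<noteq> {}" "A \<inter> C = {}"
  shows "set_dist X A B \<le> set_dist X C B + 1"
proof (cases "C = B")
  case True
  then show ?thesis using assms(3) by (simp add: set_dist_def)
next
  case C_ne_B: False
  show ?thesis
  proof (cases "C \<inter> B = {}")
    case True
    then have "A \<union> B \<noteq> X" using assms by blast
    then have "set_dist X A B \<le> 2" by (simp add: set_dist_def)
    then show ?thesis using C_ne_B True by (simp add: set_dist_def)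
  next
    case False
    then have "2 \<le> set_dist X C B" using C_ne_B by (simp add: set_dist_def)
    then show ?thesis using set_dist_le_3[of X A B] by linarith
  qed
qed

lemma set_dist_descent:
  assumes "A \<subseteq> X" "B \<subseteq> X" "A \<noteq> {}" "B \<noteq> {}" "A \<noteq> X" "B \<noteq> X" "A \<noteq> B"
  obtains C where "C \<subseteq> X" "C \<noteq> {}" "A \<inter> C = {}" "set_dist X C B + 1 = set_dist X A B"
proof -
  consider "A \<inter> B = {}" | "A \<inter> B \<noteq> {}" "A \<union> B \<noteq> X" | "A \<inter> B \<noteq> {}" "A \<union> B = X" by blast
  then show ?thesis
  proof cases
    case 1
    then show ?thesis using assms by (intro that[of B]) (auto simp: set_dist_def)
  next
    case 2
    then show ?thesis using assms by (intro that[of "X - (A \<union> B)"]) (auto simp: set_dist_def)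
  next
    case 3
    then show ?thesis using assms by (intro that[of "X - A"]) (auto simp: set_dist_def)
  qed
qed

lemma set_resolves_commute: "set_resolves X C A B \<longleftrightarrow> set_resolves X C B A"
  unfolding set_resolves_def by blast

text \<open>Overlapping incomparable sets are mutually maximally distant: a set \<open>C \<noteq> B\<close> beyond \<open>B\<close> as
  seen from \<open>A\<close> would need distances \<open>2 + 1 = 3\<close>, i.e. \<open>C\<close> disjoint from \<open>B\<close> and \<open>A \<union> C = X\<close>,
  which forces \<open>B \<subseteq> A\<close>.\<close>
lemma set_resolves_overlapping_incomparable:
  assumes "A \<inter> B \<noteq> {}" "\<not> A \<subseteq> B" "\<not> B \<subseteq> A" "A \<subseteq> X" "B \<subseteq> X"
    and "set_resolves X C A B"
  shows "C = A \<or> C = B"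
proof -
  have "C = B" if "A \<inter> B \<noteq> {}" "\<not> B \<subseteq> A" "B \<subseteq> X"
    and "set_dist X A B + set_dist X B C = set_dist X A C" for A B
  proof (rule ccontr)
    assume "C \<noteq> B"
    with that have "set_dist X A B = 2" "set_dist X B C = 1" "set_dist X A C = 3"
      by (auto simp: set_dist_def split: if_splits)
    then have "B \<inter> C = {}" "A \<union> C = X" by (auto simp: set_dist_def split: if_splits)
    then show False using that(2,3) by blast
  qed
  then show ?thesis using assms unfolding set_resolves_def by (metis inf_commute)
qed

text \<open>The vertices left out of the resolving set form a maximal laminar family: the singletons
  together with the chain of initial segments.\<close>
definition singletons :: "nat \<Rightarrow> nat set set" where
  "singletons n = (\<lambda>i. {i}) ` {..<n}"

definition initial_segments :: "nat \<Rightarrow> nat set set" where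
  "initial_segments n = (\<lambda>k. {..<k}) ` {2..<n}"

definition landmark_sets :: "nat \<Rightarrow> nat set set" where
  "landmark_sets n = Pow {..<n} - {{}, {..<n}} - (singletons n \<union> initial_segments n)"

text \<open>The last hypothesis rules out the initial segments \<open>{..<k}\<close>, \<open>2 \<le> k < n\<close>, which all contain
  \<open>0\<close> and \<open>1\<close> but not \<open>n - 1\<close>.\<close>
lemma in_landmark_setsI:
  assumes "C \<subseteq> {..<n}" "x \<in> C" "y \<in> C" "x \<noteq> y" "z < n" "z \<notin> C"
    and "n - 1 \<in> C \<or> 0 \<notin> C \<or> 1 \<notin> C"
  shows "C \<in> landmark_sets n"
  using assms unfolding landmark_sets_def singletons_def initial_segments_def by auto

lemma card_landmark_sets:
  assumes "3 \<le> n"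
  shows "card (landmark_sets n) = 2 ^ n - 2 * n"
proof -
  let ?T = "{{}, {..<n}} \<union> (singletons n \<union> initial_segments n)"
  have fin: "finite (singletons n)" "finite (initial_segments n)"
    unfolding singletons_def initial_segments_def by simp_all
  have card_sing: "card A = 1" if "A \<in> singletons n" for A
    using that unfolding singletons_def by auto
  have card_seg: "2 \<le> card A \<and> card A < n" if "A \<in> initial_segments n" for A
    using that unfolding initial_segments_def by auto
  have disj: "singletons n \<inter> initial_segments n = {}"
    using card_sing card_seg by force
  have "card (singletons n) = n"
    unfolding singletons_def by (subst card_image) (auto intro!: inj_onI)
  moreover have "card (initial_segments n) = n - 2"
    unfolding initial_segments_def by (subst card_image) (auto intro!: inj_onI)
  ultimately have "card (singletons n \<union> initial_segments n) = 2 * n - 2"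
    using card_Un_disjoint[OF fin disj] assms by simp
  moreover have "{} \<notin> singletons n \<union> initial_segments n" "{..<n} \<notin> singletons n \<union> initial_segments n"
    using card_sing card_seg assms by force+
  moreover have "{..<n} \<noteq> {}" using assms by (simp add: lessThan_empty_iff)
  ultimately have "card ?T = 2 * n"
    using fin assms by simp
  moreover have "card (Pow {..<n} - ?T) = card (Pow {..<n}) - card ?T"
    by (rule card_Diff_subset) (use fin in \<open>auto simp: singletons_def initial_segments_def\<close>)
  moreover have "landmark_sets n = Pow {..<n} - ?T"
    unfolding landmark_sets_def by blast
  ultimately show ?thesis by (simp add: card_Pow)
qed

lemma third_element:
  assumes "3 \<le> (n::nat)"
  obtains c where "c < n" "c \<noteq> a" "c \<noteq> b"
  by (rule that[of "if a \<noteq> 0 \<and> b \<noteq> 0 then 0 else if a \<noteq> 1 \<and> b \<noteq> 1 then 1 else 2"])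
    (use assms in auto)

lemma landmark_resolves_singletons:
  assumes "3 \<le> n" "a < n" "b < n" "a \<noteq> b" "b \<noteq> n - 1"
  shows "\<exists>C\<in>landmark_sets n. set_resolves {..<n} C {a} {b}"
proof -
  obtain c where c: "c < n" "c \<noteq> a" "c \<noteq> b" using third_element[OF assms(1)] .
  let ?C = "{..<n} - {b}"
  have "?C \<in> landmark_sets n" using assms c by (intro in_landmark_setsI[of _ _ a c b]) simp_all
  moreover have "set_dist {..<n} {a} {b} = 1" by (rule set_dist_eq_1I[of a]) (use assms in auto)
  moreover have "set_dist {..<n} {b} ?C = 1" by (rule set_dist_eq_1I[of b]) auto
  moreover have "set_dist {..<n} {a} ?C = 2"
    by (subst set_dist_commute, rule set_dist_eq_2I[of c _ _ a b]) (use assms c in auto)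
  ultimately show ?thesis unfolding set_resolves_def by (intro bexI[of _ ?C]) simp_all
qed

lemma landmark_resolves_singleton_inside_segment:
  assumes "3 \<le> n" "2 \<le> k" "k < n" "a < k"
  shows "\<exists>C\<in>landmark_sets n. set_resolves {..<n} C {a} {..<k}"
proof -
  obtain c where c: "c < n" "c \<noteq> a" "c \<noteq> n - 1" using third_element[OF assms(1)] .
  have "\<exists>e<k. e \<noteq> a" using assms by (intro exI[of _ "if a = 0 then 1 else 0"]) auto
  then obtain e where e: "e < k" "e \<noteq> a" by blast
  let ?C = "{..<n} - {a}"
  have "?C \<in> landmark_sets n" using assms c by (intro in_landmark_setsI[of _ _ "n - 1" c a]) auto
  moreover have "set_dist {..<n} {..<k} {a} = 2"
    by (rule set_dist_eq_2I[of e _ _ a "n - 1"]) (use assms e in auto)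
  moreover have "set_dist {..<n} {a} ?C = 1" by (rule set_dist_eq_1I[of a]) auto
  moreover have "set_dist {..<n} {..<k} ?C = 3"
    by (rule set_dist_eq_3I[of a _ _ e]) (use assms e in auto)
  ultimately show ?thesis unfolding set_resolves_def by (intro bexI[of _ ?C]) simp_all
qed

lemma landmark_resolves_singleton_outside_segment:
  assumes "2 \<le> k" "k \<le> a" "a < n"
  shows "\<exists>C\<in>landmark_sets n. set_resolves {..<n} C {a} {..<k}"
proof -
  let ?C = "insert 0 {k..<n}"
  have "?C \<in> landmark_sets n" using assms by (intro in_landmark_setsI[of _ _ 0 a 1]) auto
  moreover have "set_dist {..<n} {..<k} {a} = 1" by (rule set_dist_eq_1I[of 0]) (use assms in auto)
  moreover have "set_dist {..<n} {a} ?C = 2"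
    by (subst set_dist_commute, rule set_dist_eq_2I[of 0 _ _ a 1]) (use assms in auto)
  moreover have "set_dist {..<n} {..<k} ?C = 3"
    by (rule set_dist_eq_3I[of 1 _ _ 0]) (use assms in auto)
  ultimately show ?thesis unfolding set_resolves_def by (intro bexI[of _ ?C]) simp_all
qed

lemma landmark_resolves_segments:
  assumes "2 \<le> j" "j < k" "k < n"
  shows "\<exists>C\<in>landmark_sets n. set_resolves {..<n} C {..<j} {..<k}"
proof -
  let ?C = "{j..<n}"
  have "?C \<in> landmark_sets n" using assms by (intro in_landmark_setsI[of _ _ j "Suc j" 0]) auto
  moreover have "set_dist {..<n} {..<k} {..<j} = 2"
    by (rule set_dist_eq_2I[of j _ _ 0 "n - 1"]) (use assms in auto)
  moreover have "set_dist {..<n} {..<j} ?C = 1" by (rule set_dist_eq_1I[of 0]) (use assms in auto)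
  moreover have "set_dist {..<n} {..<k} ?C = 3"
    by (rule set_dist_eq_3I[of 0 _ _ j]) (use assms in auto)
  ultimately show ?thesis unfolding set_resolves_def by (intro bexI[of _ ?C]) simp_all
qed

lemma landmark_resolves:
  assumes "3 \<le> n" "A \<in> singletons n \<union> initial_segments n" "B \<in> singletons n \<union> initial_segments n"
    and "A \<noteq> B"
  shows "\<exists>C\<in>landmark_sets n. set_resolves {..<n} C A B"
proof -
  let ?resolved = "\<lambda>A B. \<exists>C\<in>landmark_sets n. set_resolves {..<n} C A B"
  have sym: "?resolved B A" if "?resolved A B" for A B
    using that set_resolves_commute by blast
  have sing: "?resolved {a} {b}" if "a < n" "b < n" "a \<noteq> b" for a b
  proof (cases "b = n - 1")
    case True
    then show ?thesis using landmark_resolves_singletons[OF assms(1)] that sym by auto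
  qed (use landmark_resolves_singletons[OF assms(1)] that in auto)
  have sing_seg: "?resolved {a} {..<k}" if "a < n" "2 \<le> k" "k < n" for a k
    using landmark_resolves_singleton_inside_segment[OF assms(1)]
      landmark_resolves_singleton_outside_segment that by (cases "a < k") auto
  have seg: "?resolved {..<j} {..<k}" if "2 \<le> j" "2 \<le> k" "j < n" "k < n" "j \<noteq> k" for j k
    using landmark_resolves_segments that sym by (cases "j < k") (auto simp: not_less_iff_gr_or_eq)
  have shape: "(\<exists>a<n. X = {a}) \<or> (\<exists>k. 2 \<le> k \<and> k < n \<and> X = {..<k})"
    if "X \<in> singletons n \<union> initial_segments n" for X
    using that unfolding singletons_def initial_segments_def by auto
  show ?thesis
    using shape[OF assms(2)] shape[OF assms(3)] assms(4) sing sing_seg seg sym by metis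
qed

section \<open>Boolean lattices\<close>

locale boolean_lattice_repr =
  fixes n :: nat and f :: "'a::{lattice,order_bot} \<Rightarrow> nat set"
  assumes bij: "bij_betw f UNIV (Pow {..<n})"
    and f_inf: "\<And>x y. f (inf x y) = f x \<inter> f y"
begin

lemma inj_f: "inj f"
  using bij by (simp add: bij_betw_def)

lemma range_f: "range f = Pow {..<n}"
  using bij by (simp add: bij_betw_def)

lemma f_subset: "f x \<subseteq> {..<n}"
  using range_f by blast

lemma f_surj:
  assumes "A \<subseteq> {..<n}"
  obtains x where "f x = A"
  using assms bij by (metis PowI bij_betw_inv_into_right)

lemma f_eq_empty_iff: "f x = {} \<longleftrightarrow> x = bot"
proof -
  obtain z where z: "f z = {}" using f_surj by blast
  have "inf bot z = bot" by (meson antisym bot_least inf_le1)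
  then have "f bot = {}" using f_inf[of bot z] z by simp
  then show ?thesis using inj_f by (auto dest: injD)
qed

lemma zd_vertices_iff: "x \<in> zd_vertices \<longleftrightarrow> f x \<noteq> {} \<and> f x \<noteq> {..<n}"
proof
  assume "x \<in> zd_vertices"
  then obtain b where "x \<noteq> bot" "b \<noteq> bot" "inf x b = bot" unfolding zd_vertices_def by blast
  then have "f x \<noteq> {}" "f b \<noteq> {}" "f x \<inter> f b = {}"
    using f_eq_empty_iff f_inf by metis+
  then show "f x \<noteq> {} \<and> f x \<noteq> {..<n}" using f_subset[of b] by blast
next
  assume x: "f x \<noteq> {} \<and> f x \<noteq> {..<n}"
  obtain b where b: "f b = {..<n} - f x" using f_surj[of "{..<n} - f x"] by blast
  then have "b \<noteq> bot" "inf x b = bot"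
    using x f_subset[of x] f_eq_empty_iff f_inf[of x b] by auto
  moreover have "x \<noteq> bot" using x f_eq_empty_iff by blast
  ultimately show "x \<in> zd_vertices" unfolding zd_vertices_def by blast
qed

lemma inf_eq_bot_iff: "inf x y = bot \<longleftrightarrow> f x \<inter> f y = {}"
  using f_eq_empty_iff[of "inf x y"] f_inf[of x y] by simp

lemma zd_adj_iff: "zd_adj x y \<longleftrightarrow> x \<in> zd_vertices \<and> y \<in> zd_vertices \<and> f x \<inter> f y = {}"
proof -
  have "x \<noteq> y" if "x \<in> zd_vertices" "f x \<inter> f y = {}"
    using that zd_vertices_iff by auto
  then show ?thesis unfolding zd_adj_def inf_eq_bot_iff by blast
qed

lemma image_zd_vertices: "f ` zd_vertices = Pow {..<n} - {{}, {..<n}}"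
proof
  show "f ` zd_vertices \<subseteq> Pow {..<n} - {{}, {..<n}}" using zd_vertices_iff f_subset by auto
  show "Pow {..<n} - {{}, {..<n}} \<subseteq> f ` zd_vertices"
  proof
    fix A assume A: "A \<in> Pow {..<n} - {{}, {..<n}}"
    then obtain x where "f x = A" using f_surj by blast
    then show "A \<in> f ` zd_vertices" using A zd_vertices_iff by blast
  qed
qed

lemma finite_zd_vertices: "finite (zd_vertices :: 'a set)"
proof -
  have "finite (f ` zd_vertices)" unfolding image_zd_vertices by simp
  then show ?thesis using inj_on_subset[OF inj_f subset_UNIV] by (rule finite_imageD)
qed

lemma card_zd_vertices:
  assumes "1 \<le> n"
  shows "card (zd_vertices :: 'a set) = 2 ^ n - 2"
proof -
  have "{..<n} \<noteq> {}" using assms by (simp add: lessThan_empty_iff)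
  then have "card (Pow {..<n} - {{}, {..<n}}) = 2 ^ n - 2"
    by (subst card_Diff_subset) (auto simp: card_Pow)
  then show ?thesis
    using image_zd_vertices card_image[OF inj_on_subset[OF inj_f subset_UNIV]] by metis
qed

definition zd_dist :: "'a \<Rightarrow> 'a \<Rightarrow> nat" where
  "zd_dist x y = set_dist {..<n} (f x) (f y)"

sublocale graph_distance "zd_vertices :: 'a set" zd_adj zd_dist
proof
  show "zd_dist u u = 0" for u by (simp add: zd_dist_def)
  show "u = v" if "zd_dist u v = 0" for u v
    using that inj_f by (auto simp: zd_dist_def set_dist_def split: if_splits dest: injD)
  show "zd_dist x y \<le> zd_dist z y + 1" if "zd_adj x z" for x y z
    using that unfolding zd_dist_def zd_adj_iff zd_vertices_iff
    by (intro set_dist_neighbour_le f_subset) auto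
  show "\<exists>x\<in>zd_vertices. zd_adj u x \<and> zd_dist x w + 1 = zd_dist u w"
    if u: "u \<in> zd_vertices" and w: "w \<in> zd_vertices" and "0 < zd_dist u w" for u w
  proof -
    have fu: "f u \<noteq> {}" and "f w \<noteq> {}" "f u \<noteq> {..<n}" "f w \<noteq> {..<n}"
      using u w zd_vertices_iff by auto
    moreover have "f u \<noteq> f w" using \<open>0 < zd_dist u w\<close> by (auto simp: zd_dist_def)
    ultimately obtain C where C: "C \<subseteq> {..<n}" "C \<noteq> {}" "f u \<inter> C = {}"
      "set_dist {..<n} C (f w) + 1 = set_dist {..<n} (f u) (f w)"
      by (rule set_dist_descent[OF f_subset f_subset])
    obtain x where x: "f x = C" using f_surj[OF C(1)] .
    have "f x \<noteq> {..<n}" using C(3) x fu f_subset[of u] by blast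
    then have "x \<in> zd_vertices" unfolding zd_vertices_iff using C(2) x by simp
    moreover have "zd_adj u x" unfolding zd_adj_iff using u \<open>x \<in> zd_vertices\<close> C(3) x by simp
    ultimately show ?thesis using C(4) x unfolding zd_dist_def by blast
  qed
qed

lemma strongly_resolves_iff_set_resolves:
  assumes "u \<in> zd_vertices" "v \<in> zd_vertices" "w \<in> zd_vertices"
  shows "strongly_resolves zd_vertices zd_adj w u v \<longleftrightarrow> set_resolves {..<n} (f w) (f u) (f v)"
  using strongly_resolves_iff[OF assms] unfolding set_resolves_def zd_dist_def .

lemma laminar_image_Diff_resolving_set:
  fixes W :: "'a set"
  assumes W: "strong_resolving_set zd_vertices zd_adj W"
  shows "laminar (f ` (zd_vertices - W))"
  unfolding laminar_def
proof (intro ballI)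
  fix A B assume "A \<in> f ` (zd_vertices - W)" "B \<in> f ` (zd_vertices - W)"
  then obtain u v where u: "u \<in> zd_vertices" "u \<notin> W" "A = f u"
    and v: "v \<in> zd_vertices" "v \<notin> W" "B = f v" by blast
  show "A \<inter> B = {} \<or> A \<subseteq> B \<or> B \<subseteq> A"
  proof (rule ccontr)
    assume overlap: "\<not> (A \<inter> B = {} \<or> A \<subseteq> B \<or> B \<subseteq> A)"
    then have "u \<noteq> v" using u v by blast
    then obtain w where w: "w \<in> W" "strongly_resolves zd_vertices zd_adj w u v"
      using W u v unfolding strong_resolving_set_def by blast
    moreover have "w \<in> zd_vertices" using W w(1) unfolding strong_resolving_set_def by blast
    ultimately have "set_resolves {..<n} (f w) A B"
      using strongly_resolves_iff_set_resolves[OF u(1) v(1)] u(3) v(3) by blast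
    then have "f w = f u \<or> f w = f v"
      using set_resolves_overlapping_incomparable[of A B "{..<n}" "f w"] overlap f_subset u v
      by auto
    then show False using inj_f w(1) u v by (auto dest: injD)
  qed
qed

lemma card_strong_resolving_set_ge:
  fixes W :: "'a set"
  assumes "3 \<le> n" and W: "strong_resolving_set zd_vertices zd_adj W"
  shows "2 ^ n - 2 * n \<le> card W"
proof -
  let ?U = "zd_vertices - W"
  have WV: "W \<subseteq> zd_vertices" and "finite W"
    using W unfolding strong_resolving_set_def by blast+
  have "card ?U = card (zd_vertices :: 'a set) - card W"
    using \<open>finite W\<close> WV by (rule card_Diff_subset)
  moreover have "card W \<le> card (zd_vertices :: 'a set)"
    using finite_zd_vertices WV by (rule card_mono)
  moreover have "card ?U = card (f ` ?U)"
    by (rule card_image[OF inj_on_subset[OF inj_f subset_UNIV], symmetric])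
  moreover have "card (f ` ?U) \<le> 2 * card {..<n} - 2"
  proof (rule card_laminar_proper_le)
    show "f ` ?U \<subseteq> Pow {..<n} - {{}, {..<n}}" using image_zd_vertices by blast
  qed (use assms laminar_image_Diff_resolving_set in auto)
  moreover have "2 \<le> (2::nat) ^ n" using power_increasing[of 1 n "2::nat"] assms(1) by simp
  ultimately show ?thesis using card_zd_vertices assms(1) by simp
qed

lemma strong_resolving_set_vimage_landmark_sets:
  assumes "3 \<le> n"
  shows "strong_resolving_set zd_vertices zd_adj (f -` landmark_sets n)"
proof -
  let ?W = "f -` landmark_sets n"
  have W: "?W \<subseteq> zd_vertices"
  proof
    fix x assume "x \<in> ?W"
    then show "x \<in> zd_vertices" unfolding zd_vertices_iff landmark_sets_def by auto
  qed
  have resolving: "\<exists>w\<in>?W. strongly_resolves zd_vertices zd_adj w u v"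
    if u: "u \<in> zd_vertices" and v: "v \<in> zd_vertices" and "u \<noteq> v" for u v
  proof (cases "u \<in> ?W \<or> v \<in> ?W")
    case True
    then show ?thesis using strongly_resolves_endpoint[OF u v] by blast
  next
    case False
    then have "f u \<in> singletons n \<union> initial_segments n" "f v \<in> singletons n \<union> initial_segments n"
      using u v image_zd_vertices unfolding landmark_sets_def by auto
    moreover have "f u \<noteq> f v" using \<open>u \<noteq> v\<close> inj_f by (auto dest: injD)
    ultimately obtain C where C: "C \<in> landmark_sets n" "set_resolves {..<n} C (f u) (f v)"
      using landmark_resolves[OF assms] by blast
    then obtain w where "f w = C" using f_surj unfolding landmark_sets_def by blast
    then have "w \<in> ?W" using C(1) by simp
    moreover have "strongly_resolves zd_vertices zd_adj w u v"
      using strongly_resolves_iff_set_resolves[OF u v] \<open>w \<in> ?W\<close> W C(2) \<open>f w = C\<close> by blast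
    ultimately show ?thesis by blast
  qed
  have "finite ?W" using W finite_zd_vertices by (rule finite_subset)
  with W resolving show ?thesis unfolding strong_resolving_set_def by (intro conjI ballI impI)
qed

lemma card_vimage_landmark_sets:
  assumes "3 \<le> n"
  shows "card (f -` landmark_sets n) = 2 ^ n - 2 * n"
proof -
  have "landmark_sets n \<subseteq> range f" unfolding range_f landmark_sets_def by blast
  then show ?thesis using card_vimage_inj[OF inj_f] card_landmark_sets[OF assms] by simp
qed

end

theorem mainTheorem12:
  fixes n :: nat
  assumes "n \<ge> 3"
    and "\<exists>f :: 'a::{lattice,order_bot} \<Rightarrow> nat set.
           bij_betw f UNIV (Pow {..<n}) \<and> (\<forall>x y. f (inf x y) = f x \<inter> f y)"
  shows "sdim (zd_vertices :: 'a set) zd_adj = 2 ^ n - 2 * n"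
proof -
  from assms(2) obtain f :: "'a \<Rightarrow> nat set"
    where "bij_betw f UNIV (Pow {..<n})" "\<And>x y. f (inf x y) = f x \<inter> f y" by blast
  then interpret boolean_lattice_repr n f by unfold_locales
  show ?thesis unfolding sdim_def
  proof (rule Least_equality)
    show "\<exists>W. strong_resolving_set (zd_vertices :: 'a set) zd_adj W \<and> card W = 2 ^ n - 2 * n"
      using strong_resolving_set_vimage_landmark_sets card_vimage_landmark_sets assms(1) by blast
    show "2 ^ n - 2 * n \<le> k"
      if "\<exists>W. strong_resolving_set (zd_vertices :: 'a set) zd_adj W \<and> card W = k" for k
      using that card_strong_resolving_set_ge assms(1) by blast
  qed
qed

end
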